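(* Let $a\in(0,1)$, $p\in(0,1)$, and let $X=(X_t)_{t\ge0}$ be a stationary Markov chain generated by the copula $C(u,v)=a\min(u,v)+(1-a)\max(u+v-1,0)$ and Bernoulli($p$) marginal distribution. Then $X$ is exponentially $\psi$-mixing, i.e. there exist constants $K<\infty$ and $r\in[0,1)$ with $\psi(n)\le K r^n$ for all $n$; consequently $X$ is also exponentially $\phi$-, $\rho$-, $\beta$- and $\alpha$-mixing.
   Context: A stationary Markov chain $(X_t)$ is generated by a copula $C$ and a marginal cdf $F$ if each $X_t$ has cdf $F$ and $P(X_t\le x,X_{t+1}\le y)=C(F(x),F(y))$ for all $x,y$; Bernoulli($p$) means $P(X_t=1)=p=1-P(X_t=0)$. For the stationary Markov chain, the mixing coefficients at lag $n$ are defined with respect to $X_0$ and $X_n$: $\psi(n)=\sup\left|\frac{P(X_0\in A,X_n\in B)}{P(X_0\in A)P(X_n\in B)}-1\right|$ over events $A,B$ with $P(X_0\in A)>0$, $P(X_n\in B)>0$, and $\phi(n)=\sup\left|\frac{P(X_0\in A,X_n\in B)}{P(X_0\in A)}-P(X_n\in B)\right|$ over $A,B$ with $P(X_0\in A)>0$. The chain is $\psi$-mixing (resp. $\phi$-mixing) if $\psi(n)\to0$ (resp. $\phi(n)\to0$) as $n\to\infty$; $\rho$-, $\beta$-, $\alpha$-mixing are the standard notions (maximal correlation, absolute regularity, strong mixing). *)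

theory Defs
  imports "HOL-Probability.Probability"
begin

definition pv :: "'a measure \<Rightarrow> ('a \<Rightarrow> real) \<Rightarrow> real set \<Rightarrow> real" where
  "pv M Y A = measure M (Y -` A \<inter> space M)"

definition pv2 :: "'a measure \<Rightarrow> ('a \<Rightarrow> real) \<Rightarrow> real set \<Rightarrow> ('a \<Rightarrow> real) \<Rightarrow> real set \<Rightarrow> real" where
  "pv2 M Y A Z B = measure M (Y -` A \<inter> Z -` B \<inter> space M)"

definition mix_copula :: "real \<Rightarrow> real \<Rightarrow> real \<Rightarrow> real" where
  "mix_copula a u v = a * min u v + (1 - a) * max (u + v - 1) 0"

definition bernoulli_cdf :: "real \<Rightarrow> real \<Rightarrow> real" where
  "bernoulli_cdf p x = (if x < 0 then 0 else if x < 1 then 1 - p else 1)"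

text \<open>(X_t) is a (discrete-state) Markov chain: the conditional law of X_{t+1} given
  X_0,...,X_t equals that given X_t, written in product form (no division by zero).\<close>
definition markov_chain :: "'a measure \<Rightarrow> (nat \<Rightarrow> 'a \<Rightarrow> real) \<Rightarrow> bool" where
  "markov_chain M X \<longleftrightarrow>
     (\<forall>t (x :: nat \<Rightarrow> real).
        measure M {\<omega> \<in> space M. \<forall>i\<le>Suc t. X i \<omega> = x i} * measure M {\<omega> \<in> space M. X t \<omega> = x t}
      = measure M {\<omega> \<in> space M. \<forall>i\<le>t. X i \<omega> = x i}
        * measure M {\<omega> \<in> space M. X t \<omega> = x t \<and> X (Suc t) \<omega> = x (Suc t)})"

definition copula_markov_chain ::
  "'a measure \<Rightarrow> (nat \<Rightarrow> 'a \<Rightarrow> real) \<Rightarrow> (real \<Rightarrow> real \<Rightarrow> real) \<Rightarrow> (real \<Rightarrow> real) \<Rightarrow> bool" where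
  "copula_markov_chain M X C F \<longleftrightarrow>
     prob_space M \<and> (\<forall>t. X t \<in> borel_measurable M) \<and> markov_chain M X \<and>
     (\<forall>t x. pv M (X t) {..x} = F x) \<and>
     (\<forall>t x y. pv2 M (X t) {..x} (X (Suc t)) {..y} = C (F x) (F y))"

text \<open>Mixing coefficients at lag n, with respect to X_0 and X_n (values in ereal,
  so that an unbounded supremum is \<infinity>).\<close>

definition psi_mix :: "'a measure \<Rightarrow> (nat \<Rightarrow> 'a \<Rightarrow> real) \<Rightarrow> nat \<Rightarrow> ereal" where
  "psi_mix M X n =
    (SUP (A, B) \<in> {(A, B). A \<in> sets borel \<and> B \<in> sets borel \<and>
                          pv M (X 0) A > 0 \<and> pv M (X n) B > 0}.
       ereal \<bar>pv2 M (X 0) A (X n) B / (pv M (X 0) A * pv M (X n) B) - 1\<bar>)"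

definition phi_mix :: "'a measure \<Rightarrow> (nat \<Rightarrow> 'a \<Rightarrow> real) \<Rightarrow> nat \<Rightarrow> ereal" where
  "phi_mix M X n =
    (SUP (A, B) \<in> {(A, B). A \<in> sets borel \<and> B \<in> sets borel \<and> pv M (X 0) A > 0}.
       ereal \<bar>pv2 M (X 0) A (X n) B / pv M (X 0) A - pv M (X n) B\<bar>)"

definition alpha_mix :: "'a measure \<Rightarrow> (nat \<Rightarrow> 'a \<Rightarrow> real) \<Rightarrow> nat \<Rightarrow> ereal" where
  "alpha_mix M X n =
    (SUP (A, B) \<in> {(A, B). A \<in> sets borel \<and> B \<in> sets borel}.
       ereal \<bar>pv2 M (X 0) A (X n) B - pv M (X 0) A * pv M (X n) B\<bar>)"

definition beta_mix :: "'a measure \<Rightarrow> (nat \<Rightarrow> 'a \<Rightarrow> real) \<Rightarrow> nat \<Rightarrow> ereal" where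
  "beta_mix M X n =
    (SUP (k, A, l, B) \<in> {(k :: nat, A :: nat \<Rightarrow> real set, l :: nat, B :: nat \<Rightarrow> real set). (\<forall>i<k. A i \<in> sets borel) \<and> disjoint_family_on A {..<k}
                                     \<and> (\<Union>i<k. A i) = UNIV \<and>
                                     (\<forall>j<l. B j \<in> sets borel) \<and> disjoint_family_on B {..<l}
                                     \<and> (\<Union>j<l. B j) = UNIV}.
       ereal ((1/2) * (\<Sum>i<k. \<Sum>j<l.
           \<bar>pv2 M (X 0) (A i) (X n) (B j) - pv M (X 0) (A i) * pv M (X n) (B j)\<bar>)))"

definition rho_mix :: "'a measure \<Rightarrow> (nat \<Rightarrow> 'a \<Rightarrow> real) \<Rightarrow> nat \<Rightarrow> ereal" where
  "rho_mix M X n =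
    (SUP (f, g) \<in> {(f, g). f \<in> borel_measurable borel \<and> g \<in> borel_measurable borel \<and>
                    integrable M (\<lambda>\<omega>. (f (X 0 \<omega>))\<^sup>2) \<and> integrable M (\<lambda>\<omega>. (g (X n \<omega>))\<^sup>2) \<and>
                    (LINT \<omega>|M. (f (X 0 \<omega>) - (LINT \<eta>|M. f (X 0 \<eta>)))\<^sup>2) > 0 \<and>
                    (LINT \<omega>|M. (g (X n \<omega>) - (LINT \<eta>|M. g (X n \<eta>)))\<^sup>2) > 0}.
       ereal \<bar>(LINT \<omega>|M. (f (X 0 \<omega>) - (LINT \<eta>|M. f (X 0 \<eta>))) * (g (X n \<omega>) - (LINT \<eta>|M. g (X n \<eta>))))
              / sqrt ((LINT \<omega>|M. (f (X 0 \<omega>) - (LINT \<eta>|M. f (X 0 \<eta>)))\<^sup>2)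
                      * (LINT \<omega>|M. (g (X n \<omega>) - (LINT \<eta>|M. g (X n \<eta>)))\<^sup>2))\<bar>)"

definition exp_decay :: "(nat \<Rightarrow> ereal) \<Rightarrow> bool" where
  "exp_decay c \<longleftrightarrow> (\<exists>K r::real. 0 \<le> r \<and> r < 1 \<and> (\<forall>n. c n \<le> ereal (K * r ^ n)))"

end

theory Submission
  imports Defs
begin

(* Almost surely the chain takes values in {0, 1}, so it is a stationary two-state Markov chain
   whose transition matrix has eigenvalues 1 and lambda = (c - q^2) / (p q), where q = 1 - p and
   c = C(q, q) = P(X_t = 0, X_{t+1} = 0). Summing the Markov property over paths gives
   P(X_0 = 0, X_{n+1} = 0) - q^2 = lambda (P(X_0 = 0, X_n = 0) - q^2), hence for Borel A and B
     P(X_0 in A, X_n in B) - P(X_0 in A) P(X_n in B) = lambda^n p q (1_A(0) - 1_A(1)) (1_B(0) - 1_B(1)),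
   which bounds every mixing coefficient at lag n by a constant times |lambda|^n.
   For C = a M + (1 - a) W one gets lambda = a * 1 + (1 - a) * (- min(p, q) / max(p, q)), a convex
   combination of the eigenvalues of the comonotone and the countermonotone chain, so |lambda| < 1. *)

context prob_space
begin

lemma pv_bernoulli_if_cdf:
  assumes [measurable]: "Y \<in> borel_measurable M" and "0 \<le> p" "p \<le> 1"
    and cdf: "\<And>x. pv M Y {..x} = bernoulli_cdf p x" and A: "A \<in> sets borel"
  shows "pv M Y A = indicator A 0 * (1 - p) + indicator A 1 * p"
proof -
  let ?B = "distr (measure_pmf (bernoulli_pmf p)) borel of_bool"
  have "distr M borel Y = ?B"
  proof (rule cdf_unique)
    show "real_distribution (distr M borel Y)" by simp
    show "real_distribution ?B"
      by (simp add: real_distribution_def real_distribution_axioms_def prob_space.prob_space_distr prob_space_measure_pmf)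
    show "cdf (distr M borel Y) = cdf ?B"
    proof
      fix x :: real
      have "cdf (distr M borel Y) x = bernoulli_cdf p x"
        using cdf by (simp add: cdf_def measure_distr pv_def)
      also have "\<dots> = cdf ?B x"
        using assms by (simp add: cdf_def measure_distr bernoulli_cdf_def vimage_def measure_measure_pmf_finite UNIV_bool Collect_disj_eq)
      finally show "cdf (distr M borel Y) x = cdf ?B x" .
    qed
  qed
  then have "pv M Y A = measure ?B A"
    using A measure_distr[of Y M borel A] by (simp add: pv_def)
  also have "\<dots> = indicator A 0 * (1 - p) + indicator A 1 * p"
  proof -
    have "{b. b} = {True}" "{b. \<not> b} = {False}" by auto
    then show ?thesis
      using assms by (simp add: measure_distr vimage_def measure_measure_pmf_finite indicator_def UNIV_bool Collect_neg_eq)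
  qed
  finally show ?thesis .
qed

lemma AE_in_if_pv_eq_1:
  assumes "pv M Y A = 1"
  shows "AE \<omega> in M. Y \<omega> \<in> A"
  using AE_prob_1[of "Y -` A \<inter> space M"] assms unfolding pv_def by auto

lemma prob_eq_sum_paths:
  fixes X :: "nat \<Rightarrow> 'a \<Rightarrow> real"
  assumes [measurable]: "\<And>m. X m \<in> borel_measurable M"
    and "finite S" and in_S: "AE \<omega> in M. \<forall>m. X m \<omega> \<in> S" and [measurable]: "W \<in> events"
  shows "prob ({\<omega>\<in>space M. X 0 \<omega> = i \<and> X n \<omega> = k} \<inter> W)
    = (\<Sum>x \<in> {x \<in> {..n} \<rightarrow>\<^sub>E S. x 0 = i \<and> x n = k}. prob ({\<omega>\<in>space M. \<forall>m\<le>n. X m \<omega> = x m} \<inter> W))"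
    (is "_ = (\<Sum>x\<in>?P. prob (?C x))")
proof -
  have "finite ({..n} \<rightarrow>\<^sub>E S)"
    using \<open>finite S\<close> by (simp add: finite_PiE)
  then have "finite ?P"
    by (rule finite_subset[rotated]) blast
  have cylinder_events: "?C x \<in> events" for x
    by measurable
  have "prob ({\<omega>\<in>space M. X 0 \<omega> = i \<and> X n \<omega> = k} \<inter> W) = prob (\<Union>x\<in>?P. ?C x)"
  proof (rule finite_measure_eq_AE)
    show "AE \<omega> in M. \<omega> \<in> {\<omega>\<in>space M. X 0 \<omega> = i \<and> X n \<omega> = k} \<inter> W \<longleftrightarrow> \<omega> \<in> (\<Union>x\<in>?P. ?C x)"
      using in_S
    proof eventually_elim
      case (elim \<omega>)
      show ?case
      proof
        assume \<omega>: "\<omega> \<in> {\<omega>\<in>space M. X 0 \<omega> = i \<and> X n \<omega> = k} \<inter> W"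
        then have "\<omega> \<in> ?C (restrict (\<lambda>m. X m \<omega>) {..n})"
          by simp
        moreover have "restrict (\<lambda>m. X m \<omega>) {..n} \<in> ?P"
          using \<omega> elim by simp
        ultimately show "\<omega> \<in> (\<Union>x\<in>?P. ?C x)"
          by blast
      qed auto
    qed
    show "(\<Union>x\<in>?P. ?C x) \<in> events"
      using \<open>finite ?P\<close> cylinder_events by blast
  qed simp
  also have "\<dots> = (\<Sum>x\<in>?P. prob (?C x))"
  proof (rule measure_finite_Union)
    show "disjoint_family_on ?C ?P"
      unfolding disjoint_family_on_def
    proof (intro ballI impI)
      fix x y assume "x \<in> ?P" "y \<in> ?P" "x \<noteq> y"
      then obtain m where "m \<le> n" "x m \<noteq> y m"
        using PiE_ext[of x "{..n}" _ y] by blast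
      then show "?C x \<inter> ?C y = {}" by auto
    qed
  qed (use \<open>finite ?P\<close> cylinder_events in auto)
  finally show ?thesis .
qed

lemma markov_chain_lag:
  fixes X :: "nat \<Rightarrow> 'a \<Rightarrow> real"
  assumes "markov_chain M X" and [measurable]: "\<And>m. X m \<in> borel_measurable M"
    and "finite S" "AE \<omega> in M. \<forall>m. X m \<omega> \<in> S"
  shows "prob {\<omega>\<in>space M. X 0 \<omega> = i \<and> X n \<omega> = k \<and> X (Suc n) \<omega> = j} * prob {\<omega>\<in>space M. X n \<omega> = k}
    = prob {\<omega>\<in>space M. X 0 \<omega> = i \<and> X n \<omega> = k} * prob {\<omega>\<in>space M. X n \<omega> = k \<and> X (Suc n) \<omega> = j}"
proof -
  let ?P = "{x \<in> {..n} \<rightarrow>\<^sub>E S. x 0 = i \<and> x n = k}"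
  let ?C = "\<lambda>x. {\<omega>\<in>space M. \<forall>m\<le>n. X m \<omega> = x m}"
  let ?W = "{\<omega>\<in>space M. X (Suc n) \<omega> = j}"
  have step: "prob (?C x \<inter> ?W) * prob {\<omega>\<in>space M. X n \<omega> = k}
      = prob (?C x \<inter> space M) * prob {\<omega>\<in>space M. X n \<omega> = k \<and> X (Suc n) \<omega> = j}"
    if "x \<in> ?P" for x
  proof -
    define y where "y = x(Suc n := j)"
    have y: "y n = k" "y (Suc n) = j"
      using that by (simp_all add: y_def)
    have "?C x \<inter> ?W = {\<omega>\<in>space M. \<forall>m\<le>Suc n. X m \<omega> = y m}"
      by (auto simp: y_def le_Suc_eq)
    moreover have "?C x \<inter> space M = {\<omega>\<in>space M. \<forall>m\<le>n. X m \<omega> = y m}"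
      by (auto simp: y_def)
    moreover have "prob {\<omega>\<in>space M. \<forall>m\<le>Suc n. X m \<omega> = y m} * prob {\<omega>\<in>space M. X n \<omega> = y n}
        = prob {\<omega>\<in>space M. \<forall>m\<le>n. X m \<omega> = y m}
          * prob {\<omega>\<in>space M. X n \<omega> = y n \<and> X (Suc n) \<omega> = y (Suc n)}"
      using \<open>markov_chain M X\<close> unfolding markov_chain_def by blast
    ultimately show ?thesis
      by (simp only: y)
  qed
  have "prob {\<omega>\<in>space M. X 0 \<omega> = i \<and> X n \<omega> = k \<and> X (Suc n) \<omega> = j}
      = prob ({\<omega>\<in>space M. X 0 \<omega> = i \<and> X n \<omega> = k} \<inter> ?W)"
    by (rule arg_cong[where f = prob]) auto
  then have "prob {\<omega>\<in>space M. X 0 \<omega> = i \<and> X n \<omega> = k \<and> X (Suc n) \<omega> = j} * prob {\<omega>\<in>space M. X n \<omega> = k}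
      = (\<Sum>x\<in>?P. prob (?C x \<inter> ?W) * prob {\<omega>\<in>space M. X n \<omega> = k})"
    by (simp add: prob_eq_sum_paths[OF assms(2-4)] sum_distrib_right)
  also have "\<dots> = (\<Sum>x\<in>?P. prob (?C x \<inter> space M) * prob {\<omega>\<in>space M. X n \<omega> = k \<and> X (Suc n) \<omega> = j})"
    using step by (rule sum.cong[OF refl])
  also have "\<dots> = prob ({\<omega>\<in>space M. X 0 \<omega> = i \<and> X n \<omega> = k} \<inter> space M)
      * prob {\<omega>\<in>space M. X n \<omega> = k \<and> X (Suc n) \<omega> = j}"
    by (simp only: prob_eq_sum_paths[OF assms(2-4) sets.top] sum_distrib_right)
  finally show ?thesis by (simp add: Int_absorb2)
qed

lemma integral_eq_sum_joint:
  fixes Y Z :: "'a \<Rightarrow> real"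
  assumes [measurable]: "Y \<in> borel_measurable M" "Z \<in> borel_measurable M"
    and "(\<lambda>\<omega>. h (Y \<omega>) (Z \<omega>)) \<in> borel_measurable M"
    and "finite S" and in_S: "AE \<omega> in M. Y \<omega> \<in> S \<and> Z \<omega> \<in> S"
  shows "(\<integral>\<omega>. h (Y \<omega>) (Z \<omega>) \<partial>M) = (\<Sum>i\<in>S. \<Sum>j\<in>S. h i j * prob {\<omega>\<in>space M. Y \<omega> = i \<and> Z \<omega> = j})"
proof -
  let ?E = "\<lambda>i j. {\<omega>\<in>space M. Y \<omega> = i \<and> Z \<omega> = j}"
  have "(\<integral>\<omega>. h (Y \<omega>) (Z \<omega>) \<partial>M) = (\<integral>\<omega>. (\<Sum>i\<in>S. \<Sum>j\<in>S. h i j * indicator (?E i j) \<omega>) \<partial>M)"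
  proof (rule integral_cong_AE)
    show "AE \<omega> in M. h (Y \<omega>) (Z \<omega>) = (\<Sum>i\<in>S. \<Sum>j\<in>S. h i j * indicator (?E i j) \<omega>)"
      using in_S AE_space
    proof eventually_elim
      case (elim \<omega>)
      have "(\<Sum>i\<in>S. \<Sum>j\<in>S. h i j * indicator (?E i j) \<omega>)
          = (\<Sum>i\<in>S. if Y \<omega> = i then \<Sum>j\<in>S. if Z \<omega> = j then h i j else 0 else 0)"
        using elim by (intro sum.cong) (auto simp: indicator_def intro!: sum.cong)
      then show ?case
        using elim \<open>finite S\<close> by simp
    qed
  qed (use assms in measurable)
  also have "\<dots> = (\<Sum>i\<in>S. \<Sum>j\<in>S. h i j * prob (?E i j))"
  proof -
    have "integrable M (\<lambda>\<omega>. h i j * indicator (?E i j) \<omega>)" for i j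
      by (intro integrable_mult_right integrable_real_indicator) (auto simp: less_top[symmetric])
    then show ?thesis
      by (simp add: Bochner_Integration.integral_sum Bochner_Integration.integrable_sum)
  qed
  finally show ?thesis .
qed

end

lemma sum_abs_indicator_diff_le_2:
  assumes "finite I" "disjoint_family_on A I"
  shows "(\<Sum>i\<in>I. \<bar>indicator (A i) x - indicator (A i) y\<bar>) \<le> (2::real)"
proof -
  have "(\<Sum>i\<in>I. \<bar>indicator (A i) x - indicator (A i) y\<bar>) \<le> (\<Sum>i\<in>I. indicator (A i) x + indicator (A i) y :: real)"
    by (rule sum_mono) (simp add: indicator_def)
  also have "\<dots> = indicator (\<Union>i\<in>I. A i) x + indicator (\<Union>i\<in>I. A i) y"
    using assms by (simp add: indicator_UN_disjoint sum.distrib)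
  also have "\<dots> \<le> 2"
    by (simp add: indicator_def)
  finally show ?thesis .
qed

definition two_state_eigenvalue :: "real \<Rightarrow> real \<Rightarrow> real" where
  "two_state_eigenvalue p c = (c - (1 - p)\<^sup>2) / (p * (1 - p))"

locale binary_markov_chain = prob_space M for M :: "'a measure" +
  fixes X :: "nat \<Rightarrow> 'a \<Rightarrow> real" and p c :: real
  assumes measurable_X [measurable]: "X t \<in> borel_measurable M"
    and markov: "markov_chain M X"
    and p_pos: "0 < p" and p_less_1: "p < 1"
    and marginal: "A \<in> sets borel \<Longrightarrow> pv M (X t) A = indicator A 0 * (1 - p) + indicator A 1 * p"
    and stay_zero: "prob {\<omega>\<in>space M. X t \<omega> = 0 \<and> X (Suc t) \<omega> = 0} = c"
begin

abbreviation q :: real where "q \<equiv> 1 - p"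

abbreviation lam :: real where "lam \<equiv> two_state_eigenvalue p c"

lemma prob_X_eq_0: "prob {\<omega>\<in>space M. X t \<omega> = 0} = q"
  using marginal[of "{0}" t] by (simp add: pv_def vimage_def Collect_conj_eq Int_commute)

lemma prob_X_eq_1: "prob {\<omega>\<in>space M. X t \<omega> = 1} = p"
  using marginal[of "{1}" t] by (simp add: pv_def vimage_def Collect_conj_eq Int_commute)

lemma AE_X_in_01: "AE \<omega> in M. \<forall>t. X t \<omega> \<in> {0, 1}"
proof -
  have "AE \<omega> in M. X t \<omega> \<in> {0, 1}" for t
    by (rule AE_in_if_pv_eq_1) (simp add: marginal)
  then show ?thesis
    by (simp add: AE_all_countable)
qed

lemma prob_split_state:
  assumes "{\<omega>\<in>space M. P \<omega>} \<in> events"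
  shows "prob {\<omega>\<in>space M. P \<omega>}
    = prob {\<omega>\<in>space M. P \<omega> \<and> X t \<omega> = 0} + prob {\<omega>\<in>space M. P \<omega> \<and> X t \<omega> = 1}"
proof -
  have "prob {\<omega>\<in>space M. P \<omega>} = prob ({\<omega>\<in>space M. P \<omega> \<and> X t \<omega> = 0} \<union> {\<omega>\<in>space M. P \<omega> \<and> X t \<omega> = 1})"
    by (rule finite_measure_eq_AE) (use AE_X_in_01 assms in \<open>auto elim!: AE_mp\<close>)
  also have "\<dots> = prob {\<omega>\<in>space M. P \<omega> \<and> X t \<omega> = 0} + prob {\<omega>\<in>space M. P \<omega> \<and> X t \<omega> = 1}"
    by (rule finite_measure_Union) (use assms in auto)
  finally show ?thesis .
qed

definition joint :: "nat \<Rightarrow> real \<Rightarrow> real \<Rightarrow> real" where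
  "joint n i j = prob {\<omega>\<in>space M. X 0 \<omega> = i \<and> X n \<omega> = j}"

lemma joint_Suc_0:
  "joint (Suc n) 0 0 = joint n 0 0 * c / q + joint n 0 1 * (q - c) / p"
proof -
  have lag: "prob {\<omega>\<in>space M. X 0 \<omega> = 0 \<and> X n \<omega> = k \<and> X (Suc n) \<omega> = 0}
      = joint n 0 k * prob {\<omega>\<in>space M. X n \<omega> = k \<and> X (Suc n) \<omega> = 0} / prob {\<omega>\<in>space M. X n \<omega> = k}"
    if "prob {\<omega>\<in>space M. X n \<omega> = k} \<noteq> 0" for k
    using markov_chain_lag[OF markov measurable_X finite.insertI AE_X_in_01, of 0 n k 0] that
    unfolding joint_def by (simp add: field_simps)
  have "prob {\<omega>\<in>space M. X (Suc n) \<omega> = 0} = c + prob {\<omega>\<in>space M. X n \<omega> = 1 \<and> X (Suc n) \<omega> = 0}"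
    using prob_split_state[of "\<lambda>\<omega>. X (Suc n) \<omega> = 0" n] stay_zero[of n] by (simp add: conj_commute)
  then have "prob {\<omega>\<in>space M. X n \<omega> = 1 \<and> X (Suc n) \<omega> = 0} = q - c"
    by (simp add: prob_X_eq_0)
  moreover have "joint (Suc n) 0 0 = prob {\<omega>\<in>space M. X 0 \<omega> = 0 \<and> X n \<omega> = 0 \<and> X (Suc n) \<omega> = 0}
      + prob {\<omega>\<in>space M. X 0 \<omega> = 0 \<and> X n \<omega> = 1 \<and> X (Suc n) \<omega> = 0}"
    using prob_split_state[of "\<lambda>\<omega>. X 0 \<omega> = 0 \<and> X (Suc n) \<omega> = 0" n]
    unfolding joint_def by (simp add: conj_commute conj_left_commute)
  ultimately show ?thesis
    using lag[of 0] lag[of 1] stay_zero[of n] p_pos p_less_1 by (simp add: prob_X_eq_0 prob_X_eq_1)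
qed

lemma joint_margins:
  "joint n 0 0 + joint n 0 1 = q" "joint n 1 0 + joint n 1 1 = p" "joint n 0 0 + joint n 1 0 = q"
  using prob_split_state[of "\<lambda>\<omega>. X 0 \<omega> = 0" n] prob_split_state[of "\<lambda>\<omega>. X 0 \<omega> = 1" n]
    prob_split_state[of "\<lambda>\<omega>. X n \<omega> = 0" 0]
  by (simp_all add: joint_def prob_X_eq_0 prob_X_eq_1 conj_commute)

lemma joint_0_0: "joint n 0 0 = q\<^sup>2 + lam ^ n * p * q"
proof (induction n)
  case 0
  have "joint 0 0 0 = q"
    by (simp add: joint_def prob_X_eq_0)
  then show ?case
    by (simp add: power2_eq_square algebra_simps)
next
  case (Suc n)
  have eigenvalue: "lam * (p * q) = c - q\<^sup>2"
    using p_pos p_less_1 by (simp add: two_state_eigenvalue_def)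
  have "joint n 0 1 = p * q - lam ^ n * p * q"
    using joint_margins(1)[of n] Suc.IH by (simp add: power2_eq_square algebra_simps)
  then have "joint (Suc n) 0 0 = (q\<^sup>2 + lam ^ n * p * q) * c / q + (p * q - lam ^ n * p * q) * (q - c) / p"
    by (simp only: joint_Suc_0 Suc.IH)
  also have "\<dots> = (q + lam ^ n * p) * c + q * (1 - lam ^ n) * (q - c)"
    using p_pos p_less_1 by (simp add: field_simps power2_eq_square)
  also have "\<dots> = q\<^sup>2 + lam ^ n * (c - q\<^sup>2)"
    by (simp add: power2_eq_square algebra_simps)
  finally show ?case
    by (simp flip: eigenvalue)
qed

lemma joint_closed_form:
  "joint n 0 0 = q\<^sup>2 + lam ^ n * p * q" "joint n 0 1 = p * q - lam ^ n * p * q"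
  "joint n 1 0 = p * q - lam ^ n * p * q" "joint n 1 1 = p\<^sup>2 + lam ^ n * p * q"
  using joint_margins[of n] joint_0_0[of n] by (simp_all add: power2_eq_square algebra_simps)

lemma integral_pair:
  assumes "(\<lambda>\<omega>. h (X 0 \<omega>) (X n \<omega>)) \<in> borel_measurable M"
  shows "(\<integral>\<omega>. h (X 0 \<omega>) (X n \<omega>) \<partial>M)
    = q\<^sup>2 * h 0 0 + p * q * (h 0 1 + h 1 0) + p\<^sup>2 * h 1 1 + lam ^ n * p * q * (h 0 0 - h 0 1 - h 1 0 + h 1 1)"
proof -
  have "AE \<omega> in M. X 0 \<omega> \<in> {0, 1} \<and> X n \<omega> \<in> {0, 1}"
    using AE_X_in_01 by eventually_elim blast
  then have "(\<integral>\<omega>. h (X 0 \<omega>) (X n \<omega>) \<partial>M)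
      = h 0 0 * joint n 0 0 + h 0 1 * joint n 0 1 + (h 1 0 * joint n 1 0 + h 1 1 * joint n 1 1)"
    using integral_eq_sum_joint[of "X 0" "X n" h "{0, 1}"] assms by (simp add: joint_def)
  then show ?thesis
    by (simp add: joint_closed_form algebra_simps)
qed

lemma integral_X:
  assumes [measurable]: "f \<in> borel_measurable borel"
  shows "(\<integral>\<omega>. f (X t \<omega>) \<partial>M) = q * f 0 + p * f 1"
  using integral_pair[of "\<lambda>_ j. f j" t] by (simp add: power2_eq_square algebra_simps)

lemma variance_X:
  assumes [measurable]: "f \<in> borel_measurable borel"
  shows "(\<integral>\<omega>. (f (X t \<omega>) - (\<integral>\<eta>. f (X t \<eta>) \<partial>M))\<^sup>2 \<partial>M) = p * q * (f 0 - f 1)\<^sup>2"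
  by (simp only: integral_X[OF assms]) (subst integral_X; simp add: power2_eq_square algebra_simps)

lemma covariance_X0_Xn:
  assumes [measurable]: "f \<in> borel_measurable borel" "g \<in> borel_measurable borel"
  shows "(\<integral>\<omega>. (f (X 0 \<omega>) - (\<integral>\<eta>. f (X 0 \<eta>) \<partial>M)) * (g (X n \<omega>) - (\<integral>\<eta>. g (X n \<eta>) \<partial>M)) \<partial>M)
    = lam ^ n * p * q * (f 0 - f 1) * (g 0 - g 1)"
  by (simp only: integral_X assms) (subst integral_pair; simp add: power2_eq_square algebra_simps)

lemma pv2_X0_Xn:
  assumes [measurable]: "A \<in> sets borel" "B \<in> sets borel"
  shows "pv2 M (X 0) A (X n) B = pv M (X 0) A * pv M (X n) B
    + lam ^ n * p * q * (indicator A 0 - indicator A 1) * (indicator B 0 - indicator B 1)"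
proof -
  have "pv2 M (X 0) A (X n) B = (\<integral>\<omega>. indicator (X 0 -` A \<inter> X n -` B \<inter> space M) \<omega> \<partial>M)"
    unfolding pv2_def by simp
  also have "\<dots> = (\<integral>\<omega>. indicator A (X 0 \<omega>) * indicator B (X n \<omega>) \<partial>M)"
    by (rule Bochner_Integration.integral_cong) (auto simp: indicator_def)
  finally show ?thesis
    by (simp only:) (subst integral_pair; simp add: marginal power2_eq_square algebra_simps)
qed

lemma pq_pos: "0 < p * q"
  using p_pos p_less_1 by simp

lemma abs_pv2_minus_product:
  assumes "A \<in> sets borel" "B \<in> sets borel"
  shows "\<bar>pv2 M (X 0) A (X n) B - pv M (X 0) A * pv M (X n) B\<bar>
    = \<bar>lam\<bar> ^ n * (p * q * \<bar>indicator A 0 - indicator A 1\<bar>) * \<bar>indicator B 0 - indicator B 1\<bar>"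
  using p_pos p_less_1 by (simp add: pv2_X0_Xn assms abs_mult power_abs)

lemma pq_abs_indicator_diff_le_pv:
  assumes "A \<in> sets borel"
  shows "p * q * \<bar>indicator A 0 - indicator A 1\<bar> \<le> pv M (X t) A"
  using p_pos p_less_1 by (simp add: marginal assms indicator_def mult_le_cancel_left1)

lemma alpha_mix_le: "alpha_mix M X n \<le> ereal (\<bar>lam\<bar> ^ n)"
  unfolding alpha_mix_def
proof (intro SUP_least, clarify)
  fix A B :: "real set" assume A: "A \<in> sets borel" and B: "B \<in> sets borel"
  have "\<bar>pv2 M (X 0) A (X n) B - pv M (X 0) A * pv M (X n) B\<bar> \<le> \<bar>lam\<bar> ^ n * 1 * 1"
  proof -
    have "p * q * \<bar>indicator A 0 - indicator A 1\<bar> \<le> 1"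
      using pq_abs_indicator_diff_le_pv[OF A, of 0] prob_le_1 unfolding pv_def by (rule order_trans)
    then show ?thesis
      unfolding abs_pv2_minus_product[OF A B] using pq_pos
      by (intro mult_mono) (auto simp: indicator_def)
  qed
  then show "ereal \<bar>pv2 M (X 0) A (X n) B - pv M (X 0) A * pv M (X n) B\<bar> \<le> ereal (\<bar>lam\<bar> ^ n)"
    by simp
qed

lemma phi_mix_le: "phi_mix M X n \<le> ereal (\<bar>lam\<bar> ^ n)"
  unfolding phi_mix_def
proof (intro SUP_least, clarify)
  fix A B :: "real set" assume A: "A \<in> sets borel" and B: "B \<in> sets borel" and pos: "0 < pv M (X 0) A"
  have "\<bar>pv2 M (X 0) A (X n) B - pv M (X 0) A * pv M (X n) B\<bar> \<le> \<bar>lam\<bar> ^ n * pv M (X 0) A * 1"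
    unfolding abs_pv2_minus_product[OF A B]
    using pq_abs_indicator_diff_le_pv[OF A, of 0] pq_pos pos
    by (intro mult_mono) (auto simp: indicator_def)
  moreover have "pv2 M (X 0) A (X n) B / pv M (X 0) A - pv M (X n) B
      = (pv2 M (X 0) A (X n) B - pv M (X 0) A * pv M (X n) B) / pv M (X 0) A"
    using pos by (simp add: field_simps)
  ultimately have "\<bar>pv2 M (X 0) A (X n) B / pv M (X 0) A - pv M (X n) B\<bar> \<le> \<bar>lam\<bar> ^ n"
    using pos by (simp add: abs_divide pos_divide_le_eq)
  then show "ereal \<bar>pv2 M (X 0) A (X n) B / pv M (X 0) A - pv M (X n) B\<bar> \<le> ereal (\<bar>lam\<bar> ^ n)"
    by simp
qed

lemma psi_mix_le: "psi_mix M X n \<le> ereal (\<bar>lam\<bar> ^ n / (p * q))"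
  unfolding psi_mix_def
proof (intro SUP_least, clarify)
  fix A B :: "real set"
  assume A: "A \<in> sets borel" and B: "B \<in> sets borel"
    and pos: "0 < pv M (X 0) A" "0 < pv M (X n) B"
  have "p * q * \<bar>pv2 M (X 0) A (X n) B - pv M (X 0) A * pv M (X n) B\<bar>
      = \<bar>lam\<bar> ^ n * (p * q * \<bar>indicator A 0 - indicator A 1\<bar>) * (p * q * \<bar>indicator B 0 - indicator B 1\<bar>)"
    by (simp add: abs_pv2_minus_product[OF A B])
  also have "\<dots> \<le> \<bar>lam\<bar> ^ n * pv M (X 0) A * pv M (X n) B"
    using pq_abs_indicator_diff_le_pv[OF A, of 0] pq_abs_indicator_diff_le_pv[OF B, of n] pq_pos pos
    by (intro mult_mono) auto
  finally have "\<bar>pv2 M (X 0) A (X n) B - pv M (X 0) A * pv M (X n) B\<bar> / (pv M (X 0) A * pv M (X n) B)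
      \<le> \<bar>lam\<bar> ^ n / (p * q)"
    using pos pq_pos by (simp add: divide_le_eq le_divide_eq mult.commute mult.left_commute)
  moreover have "pv2 M (X 0) A (X n) B / (pv M (X 0) A * pv M (X n) B) - 1
      = (pv2 M (X 0) A (X n) B - pv M (X 0) A * pv M (X n) B) / (pv M (X 0) A * pv M (X n) B)"
    using pos by (simp add: field_simps)
  ultimately show "ereal \<bar>pv2 M (X 0) A (X n) B / (pv M (X 0) A * pv M (X n) B) - 1\<bar>
      \<le> ereal (\<bar>lam\<bar> ^ n / (p * q))"
    using pos by (simp add: abs_divide abs_mult)
qed

lemma beta_mix_le: "beta_mix M X n \<le> ereal (2 * \<bar>lam\<bar> ^ n)"
  unfolding beta_mix_def
proof (intro SUP_least, clarify)
  fix k l :: nat and A B :: "nat \<Rightarrow> real set"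
  assume A: "\<forall>i<k. A i \<in> sets borel" "disjoint_family_on A {..<k}"
    and B: "\<forall>j<l. B j \<in> sets borel" "disjoint_family_on B {..<l}"
  have "(\<Sum>i<k. \<Sum>j<l. \<bar>pv2 M (X 0) (A i) (X n) (B j) - pv M (X 0) (A i) * pv M (X n) (B j)\<bar>)
      = (\<Sum>i<k. \<Sum>j<l. \<bar>lam\<bar> ^ n * (p * q) * (\<bar>indicator (A i) 0 - indicator (A i) 1\<bar>
          * \<bar>indicator (B j) 0 - indicator (B j) 1\<bar>))"
    using A(1) B(1) by (intro sum.cong) (simp_all add: abs_pv2_minus_product mult_ac)
  also have "\<dots> = \<bar>lam\<bar> ^ n * (p * q) * ((\<Sum>i<k. \<bar>indicator (A i) 0 - indicator (A i) 1\<bar>)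
          * (\<Sum>j<l. \<bar>indicator (B j) 0 - indicator (B j) 1\<bar>))"
    by (subst sum_product) (simp only: sum_distrib_left)
  also have "\<dots> \<le> \<bar>lam\<bar> ^ n * 1 * (2 * 2)"
    using sum_abs_indicator_diff_le_2[OF _ A(2)] sum_abs_indicator_diff_le_2[OF _ B(2)] pq_pos p_pos p_less_1
    by (intro mult_mono) (auto intro: sum_nonneg mult_le_one)
  finally show "ereal (1 / 2 * (\<Sum>i<k. \<Sum>j<l.
      \<bar>pv2 M (X 0) (A i) (X n) (B j) - pv M (X 0) (A i) * pv M (X n) (B j)\<bar>)) \<le> ereal (2 * \<bar>lam\<bar> ^ n)"
    by simp
qed

lemma rho_mix_le: "rho_mix M X n \<le> ereal (\<bar>lam\<bar> ^ n)"
  unfolding rho_mix_def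
proof (intro SUP_least, clarify)
  fix f g :: "real \<Rightarrow> real"
  assume f: "f \<in> borel_measurable borel" and g: "g \<in> borel_measurable borel"
  define u where "u = (f 0 - f 1) * (g 0 - g 1)"
  have "(p * q * (f 0 - f 1)\<^sup>2) * (p * q * (g 0 - g 1)\<^sup>2) = (p * q * u)\<^sup>2"
    by (simp add: u_def power2_eq_square algebra_simps)
  then have "sqrt ((p * q * (f 0 - f 1)\<^sup>2) * (p * q * (g 0 - g 1)\<^sup>2)) = p * q * \<bar>u\<bar>"
    using p_pos p_less_1 by (simp add: abs_mult)
  moreover have "\<bar>lam ^ n * p * q * (f 0 - f 1) * (g 0 - g 1) / (p * q * \<bar>u\<bar>)\<bar> \<le> \<bar>lam\<bar> ^ n"
    using pq_pos by (cases "u = 0") (simp_all add: u_def abs_mult abs_divide power_abs)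
  ultimately show "ereal \<bar>(\<integral>\<omega>. (f (X 0 \<omega>) - (\<integral>\<eta>. f (X 0 \<eta>) \<partial>M)) * (g (X n \<omega>) - (\<integral>\<eta>. g (X n \<eta>) \<partial>M)) \<partial>M)
      / sqrt ((\<integral>\<omega>. (f (X 0 \<omega>) - (\<integral>\<eta>. f (X 0 \<eta>) \<partial>M))\<^sup>2 \<partial>M)
        * (\<integral>\<omega>. (g (X n \<omega>) - (\<integral>\<eta>. g (X n \<eta>) \<partial>M))\<^sup>2 \<partial>M))\<bar> \<le> ereal (\<bar>lam\<bar> ^ n)"
    by (simp add: covariance_X0_Xn variance_X f g)
qed

end

lemma binary_markov_chain_if_copula:
  assumes cmc: "copula_markov_chain M X C (bernoulli_cdf p)" and "0 < p" "p < 1"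
  shows "binary_markov_chain M X p (C (1 - p) (1 - p))"
proof -
  interpret prob_space M
    using cmc by (simp add: copula_markov_chain_def)
  have [measurable]: "X t \<in> borel_measurable M" for t
    using cmc by (simp add: copula_markov_chain_def)
  have marginal: "pv M (X t) A = indicator A 0 * (1 - p) + indicator A 1 * p" if "A \<in> sets borel" for t A
    using assms that by (intro pv_bernoulli_if_cdf) (auto simp: copula_markov_chain_def)
  have AE_01: "AE \<omega> in M. X t \<omega> \<in> {0, 1}" for t
    by (rule AE_in_if_pv_eq_1) (simp add: marginal)
  have "prob {\<omega>\<in>space M. X t \<omega> = 0 \<and> X (Suc t) \<omega> = 0} = pv2 M (X t) {..0} (X (Suc t)) {..0}" for t
    unfolding pv2_def
  proof (rule finite_measure_eq_AE)
    show "AE \<omega> in M. \<omega> \<in> {\<omega>\<in>space M. X t \<omega> = 0 \<and> X (Suc t) \<omega> = 0}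
        \<longleftrightarrow> \<omega> \<in> X t -` {..0} \<inter> X (Suc t) -` {..0} \<inter> space M"
      using AE_01[of t] AE_01[of "Suc t"] by eventually_elim auto
  qed measurable
  moreover have "pv2 M (X t) {..0} (X (Suc t)) {..0} = C (1 - p) (1 - p)" for t
    using cmc by (simp add: copula_markov_chain_def bernoulli_cdf_def)
  ultimately show ?thesis
    using cmc marginal assms(2,3)
    by (simp add: binary_markov_chain_def binary_markov_chain_axioms_def copula_markov_chain_def prob_space_axioms)
qed

lemma abs_two_state_eigenvalue_mix_copula_less_1:
  assumes "0 < a" "a < 1" "0 < p" "p < 1"
  shows "\<bar>two_state_eigenvalue p (mix_copula a (1 - p) (1 - p))\<bar> < 1"
proof -
  define r where "r = min p (1 - p) / max p (1 - p)"
  have "0 \<le> r" "r \<le> 1"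
    using assms by (auto simp: r_def)
  then have "0 \<le> (1 - a) * r" "(1 - a) * r \<le> 1 - a"
    using assms by (simp_all add: mult_left_le)
  moreover have "two_state_eigenvalue p (mix_copula a (1 - p) (1 - p)) = a * 1 + (1 - a) * (- r)"
    using assms unfolding r_def
    by (cases "p \<le> 1 / 2") (simp_all add: two_state_eigenvalue_def mix_copula_def field_simps power2_eq_square)
  ultimately show ?thesis
    using assms by (simp only: abs_less_iff) linarith
qed

theorem theorem2:
  fixes M :: "'a measure" and X :: "nat \<Rightarrow> 'a \<Rightarrow> real" and a p :: real
  assumes "0 < a" "a < 1" "0 < p" "p < 1"
    and "copula_markov_chain M X (mix_copula a) (bernoulli_cdf p)"
  shows "exp_decay (psi_mix M X) \<and> exp_decay (phi_mix M X) \<and> exp_decay (rho_mix M X)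
         \<and> exp_decay (beta_mix M X) \<and> exp_decay (alpha_mix M X)"
proof -
  interpret binary_markov_chain M X p "mix_copula a (1 - p) (1 - p)"
    using assms(5,3,4) by (rule binary_markov_chain_if_copula)
  have "\<bar>lam\<bar> < 1"
    using assms(1-4) by (rule abs_two_state_eigenvalue_mix_copula_less_1)
  then have decay: "exp_decay c" if "\<And>n. c n \<le> ereal (K * \<bar>lam\<bar> ^ n)" for c K
    unfolding exp_decay_def using that abs_ge_zero by blast
  have "exp_decay (psi_mix M X)"
    by (rule decay[of _ "1 / (p * q)"]) (use psi_mix_le in simp)
  moreover have "exp_decay (phi_mix M X)" "exp_decay (rho_mix M X)" "exp_decay (alpha_mix M X)"
    by (rule decay[of _ 1], use phi_mix_le rho_mix_le alpha_mix_le in simp)+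
  moreover have "exp_decay (beta_mix M X)"
    by (rule decay[of _ 2]) (rule beta_mix_le)
  ultimately show ?thesis
    by blast
qed

end
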